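(* Let $r\in\mathbb{Z}$, $s\in\mathbb{N}$ be coprime with $|r|<s$, let $\theta=\arccos(r/s)$, and let $k\in\mathbb{N}$ be squarefree. Let $E$ be the elliptic curve $y^2=x\bigl(x-(s-r)k\bigr)\bigl(x+(s+r)k\bigr)$ over $\mathbb{Q}$ associated with $(r,s,k)$. (i) If $k$ is odd and $E(\mathbb{Q})$ has a point of order $4$ or $8$, then $k=1$. (ii) If $k$ is even and $E(\mathbb{Q})$ has a point of order $4$ or $8$, then $k=2$. (iii) If $k$ is odd and $E(\mathbb{Q})$ has a point of order $3$ or $6$, then $k\in\{1,3\}$. (iv) If $k$ is even and $E(\mathbb{Q})$ has a point of order $3$ or $6$, then $k\in\{2,6\}$.
   Context: Given $\theta\in(0,\pi)$ with $\cos\theta=r/s$ in lowest terms, $k\in\mathbb{N}$ is $\theta$-congruent if there is a triangle with rational sides having angle $\theta$ and area $k\sqrt{s^2-r^2}$; this holds iff $E(\mathbb{Q})$ has a point of order $>2$, and $k$ is said to be $\theta$-congruent due to $N$-torsion when $E(\mathbb{Q})$ has a point of order $N$ (which then yields such a triangle). *)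

theory Defs
  imports Complex_Main "HOL-Computational_Algebra.Squarefree"
begin

datatype ecpt = Infty | Pt rat rat

definition on_curve :: "rat \<Rightarrow> rat \<Rightarrow> rat \<Rightarrow> ecpt \<Rightarrow> bool" where
  "on_curve a2 a4 a6 P = (case P of Infty \<Rightarrow> True
     | Pt x y \<Rightarrow> y^2 = x^3 + a2 * x^2 + a4 * x + a6)"

definition ec_add :: "rat \<Rightarrow> rat \<Rightarrow> ecpt \<Rightarrow> ecpt \<Rightarrow> ecpt" where
  "ec_add a2 a4 P Q = (case P of Infty \<Rightarrow> Q | Pt x1 y1 \<Rightarrow>
     (case Q of Infty \<Rightarrow> P | Pt x2 y2 \<Rightarrow>
       (if x1 = x2 \<and> y1 = - y2 then Infty
        else let l = (if x1 = x2 then (3 * x1^2 + 2 * a2 * x1 + a4) / (2 * y1)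
                      else (y2 - y1) / (x2 - x1));
                 x3 = l^2 - a2 - x1 - x2
             in Pt x3 (- (y1 + l * (x3 - x1))))))"

fun ec_mult :: "rat \<Rightarrow> rat \<Rightarrow> nat \<Rightarrow> ecpt \<Rightarrow> ecpt" where
  "ec_mult a2 a4 0 P = Infty"
| "ec_mult a2 a4 (Suc n) P = ec_add a2 a4 P (ec_mult a2 a4 n P)"

definition has_order :: "rat \<Rightarrow> rat \<Rightarrow> rat \<Rightarrow> ecpt \<Rightarrow> nat \<Rightarrow> bool" where
  "has_order a2 a4 a6 P N = (on_curve a2 a4 a6 P \<and> 0 < N \<and> ec_mult a2 a4 N P = Infty
     \<and> (\<forall>m. 0 < m \<and> m < N \<longrightarrow> ec_mult a2 a4 m P \<noteq> Infty))"

definition has_point_of_order :: "rat \<Rightarrow> rat \<Rightarrow> rat \<Rightarrow> nat \<Rightarrow> bool" where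
  "has_point_of_order a2 a4 a6 N = (\<exists>P. has_order a2 a4 a6 P N)"

text \<open>The curve y^2 = x (x - (s-r)k) (x + (s+r)k)
  = x^3 + 2rk x^2 - (s^2-r^2)k^2 x.\<close>
definition theta_curve_has_order :: "int \<Rightarrow> int \<Rightarrow> int \<Rightarrow> nat \<Rightarrow> bool" where
  "theta_curve_has_order r s k N =
     (let A = of_int ((s - r) * k) :: rat; B = of_int ((s + r) * k)
      in has_point_of_order (B - A) (- (A * B)) 0 N)"

end

theory Submission
  imports Defs "HOL-Computational_Algebra.Primes"
begin

(* Write the theta-curve as y^2 = (x - e1)(x - e2)(x - e3) with the rational roots
   e1 = 0, e2 = A = (s-r)k, e3 = -B = -(s+r)k.  For a curve with three distinct rational
   roots we develop, inside the locale split_curve: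
   - the elementary group law facts (closure, negation, cancellation, N P = O gives
     (N - j) P = -(j P));
   - the 2-descent map P |-> x(P) - e1 (mod squares), which is multiplicative modulo
     squares, so it takes square values on every even multiple 2m P;
   - the doubling formula, showing x(2P) - e_i is a square, and its invariance under
     translation by the 2-torsion point (e1,0).
   Consequently (a) a point of order 4k yields a 2-torsion point at which all three
   descent maps are squares, and (b) a point of order 3 or 6 yields an inflection point
   x with x - e_i = u_i^2 and u1 u2 + u1 u3 + u2 u3 = 0.
   For the theta-curve, (a) forces (s-r)k and 2sk to be squares, and (b), after
   parametrising u1/u2 = m/n, forces (s-r)k (m-n)(m+n), -(s+r)k m(m+2n), -2sk n(2m+n)
   to be squares.  A p-adic valuation count then shows that every prime divisor of the
   squarefree k is 2 in case (a) and 2 or 3 in case (b), which gives the theorem. *)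


section \<open>Rational squares\<close>

definition is_square :: "rat \<Rightarrow> bool" where
  "is_square q \<longleftrightarrow> (\<exists>r. q = r^2)"

lemma is_square_power2 [simp]: "is_square (a^2)"
  unfolding is_square_def by blast

lemma is_square_self_mult [simp]: "is_square (a * a)"
  unfolding is_square_def by (metis power2_eq_square)

lemma is_square_one [simp]: "is_square 1"
  using is_square_power2[of 1] by simp

lemma is_square_nonneg: "is_square q \<Longrightarrow> q \<ge> 0"
  unfolding is_square_def by auto

lemma is_square_cancel:
  assumes "is_square (a * b^2)" "b \<noteq> 0"
  shows "is_square a"
proof -
  obtain r where "a * b^2 = r^2" using assms(1) unfolding is_square_def by blast
  then have "a = (r/b)^2" using assms(2) by (simp add: field_simps power2_eq_square)
  then show ?thesis unfolding is_square_def by blast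
qed

text \<open>If abc and bd are squares (b \<noteq> 0) then so is cad: the square classes form a group.\<close>
lemma is_square_quotient:
  assumes "is_square (a*b*c)" "is_square (b*d)" "b \<noteq> 0"
  shows "is_square (c*a*d)"
proof -
  obtain r t where "a*b*c = r^2" "b*d = t^2" using assms unfolding is_square_def by blast
  then have "c*a*d = (r*t/b)^2" using assms(3) by (simp add: field_simps power2_eq_square)
  then show ?thesis unfolding is_square_def by blast
qed


section \<open>Curves with three rational 2-torsion points\<close>

locale split_curve =
  fixes a2 a4 a6 e1 e2 e3 :: rat
  assumes d12: "e1 \<noteq> e2" and d13: "e1 \<noteq> e3" and d23: "e2 \<noteq> e3"
    and ha2: "a2 = -(e1+e2+e3)" and ha4: "a4 = e1*e2+e1*e3+e2*e3" and ha6: "a6 = -(e1*e2*e3)"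
begin

definition cubic :: "rat \<Rightarrow> rat" where
  "cubic x = (x-e1)*(x-e2)*(x-e3)"

definition slope :: "rat \<Rightarrow> rat \<Rightarrow> rat \<Rightarrow> rat \<Rightarrow> rat" where
  "slope x1 y1 x2 y2 = (if x1 = x2 then (3 * x1^2 + 2 * a2 * x1 + a4) / (2 * y1)
                        else (y2 - y1) / (x2 - x1))"

lemma on_curve_Pt: "on_curve a2 a4 a6 (Pt x y) \<longleftrightarrow> y^2 = cubic x"
  unfolding on_curve_def cubic_def ha2 ha4 ha6 by (simp, algebra)

lemma cubic_roots: "cubic e1 = 0" "cubic e2 = 0" "cubic e3 = 0"
  unfolding cubic_def by simp_all

lemma cubic_zero: "cubic x = 0 \<Longrightarrow> x = e1 \<or> x = e2 \<or> x = e3"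
  unfolding cubic_def by simp

lemma add_Pt:
  "\<not> (x1 = x2 \<and> y1 = - y2) \<Longrightarrow> ec_add a2 a4 (Pt x1 y1) (Pt x2 y2) =
     Pt (slope x1 y1 x2 y2 ^2 - a2 - x1 - x2)
        (- (y1 + slope x1 y1 x2 y2 * ((slope x1 y1 x2 y2 ^2 - a2 - x1 - x2) - x1)))"
  unfolding ec_add_def slope_def Let_def by simp

lemma add_opposite: "x1 = x2 \<and> y1 = - y2 \<Longrightarrow> ec_add a2 a4 (Pt x1 y1) (Pt x2 y2) = Infty"
  unfolding ec_add_def by simp

lemma add_Infty_left [simp]: "ec_add a2 a4 Infty Q = Q"
  unfolding ec_add_def by simp

lemma add_Infty_right [simp]: "ec_add a2 a4 P Infty = P"
  unfolding ec_add_def by (cases P) simp_all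

lemma same_x_on_curve: "y1^2 = cubic x \<Longrightarrow> y2^2 = cubic x \<Longrightarrow> y1 = y2 \<or> y1 = - y2"
  by (metis power2_eq_iff)

text \<open>The cubic minus the square of the chord (or tangent) through (x1,y1) and the point
  with abscissa x2, compared with the monic cubic having roots x1, x2 and the abscissa of
  the third intersection point.\<close>
definition chord_defect :: "rat \<Rightarrow> rat \<Rightarrow> rat \<Rightarrow> rat \<Rightarrow> rat \<Rightarrow> rat" where
  "chord_defect l x1 y1 x2 x = cubic x - (l*(x-x1)+y1)^2 - (x-x1)*(x-x2)*(x-(l^2-a2-x1-x2))"

lemma chord_defect_affine:
  "chord_defect l x1 y1 x2 x = chord_defect l x1 y1 x2 0
     + x * (chord_defect l x1 y1 x2 1 - chord_defect l x1 y1 x2 0)"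
  unfolding chord_defect_def cubic_def unfolding ha2 by algebra

text \<open>The defect vanishes at x1 and x2 (and, for the tangent, has slope 0 there), hence
  vanishes identically.\<close>
lemma chord_defect_zero:
  assumes "y1^2 = cubic x1" "y2^2 = cubic x2" "\<not> (x1 = x2 \<and> y1 = - y2)"
  shows "chord_defect (slope x1 y1 x2 y2) x1 y1 x2 x = 0"
proof (cases "x1 = x2")
  case True
  then have "y1 = y2" using assms same_x_on_curve by blast
  then have y1: "y1 \<noteq> 0" using assms True by auto
  define l where "l = slope x1 y1 x2 y2"
  have l: "l * (2*y1) = 3 * x1^2 + 2 * a2 * x1 + a4"
    using y1 True unfolding l_def slope_def by simp
  have "chord_defect l x1 y1 x1 x
      = chord_defect l x1 y1 x1 x1 + (x - x1) * (3 * x1^2 + 2 * a2 * x1 + a4 - l*(2*y1))"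
    unfolding chord_defect_def cubic_def unfolding ha2 ha4 by algebra
  also have "\<dots> = 0" unfolding l using assms(1) unfolding chord_defect_def by simp
  finally show ?thesis using True l_def by simp
next
  case False
  define l where "l = slope x1 y1 x2 y2"
  have l: "l * (x2 - x1) = y2 - y1" using False unfolding l_def slope_def by simp
  have "chord_defect l x1 y1 x2 x * (x2 - x1)
      = chord_defect l x1 y1 x2 x1 * (x2 - x) + chord_defect l x1 y1 x2 x2 * (x - x1)"
    by (subst (1 2 3) chord_defect_affine) algebra
  also have "chord_defect l x1 y1 x2 x1 = 0" using assms(1) unfolding chord_defect_def by simp
  also have "chord_defect l x1 y1 x2 x2 = 0"
    using assms(2) l unfolding chord_defect_def by (simp add: algebra_simps)
  finally show ?thesis using False l_def by simp
qed

lemma chord_identity: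
  assumes "y1^2 = cubic x1" "y2^2 = cubic x2" "\<not> (x1 = x2 \<and> y1 = - y2)"
  shows "cubic x - (slope x1 y1 x2 y2 * (x-x1) + y1)^2
       = (x-x1)*(x-x2)*(x-(slope x1 y1 x2 y2^2-a2-x1-x2))"
  using chord_defect_zero[OF assms, of x] unfolding chord_defect_def by simp

lemma on_curve_add:
  assumes "on_curve a2 a4 a6 P" "on_curve a2 a4 a6 Q"
  shows "on_curve a2 a4 a6 (ec_add a2 a4 P Q)"
proof (cases P; cases Q)
  fix x1 y1 x2 y2 assume P: "P = Pt x1 y1" and Q: "Q = Pt x2 y2"
  show ?thesis
  proof (cases "x1 = x2 \<and> y1 = - y2")
    case True then show ?thesis using P Q add_opposite by (simp add: on_curve_def)
  next
    case False
    have "y1^2 = cubic x1" "y2^2 = cubic x2" using assms P Q on_curve_Pt by auto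
    from chord_identity[OF this False, of "slope x1 y1 x2 y2 ^2 - a2 - x1 - x2"]
    show ?thesis using P Q False by (simp add: add_Pt on_curve_Pt power2_eq_square algebra_simps)
  qed
qed (use assms in auto)

definition neg :: "ecpt \<Rightarrow> ecpt" where
  "neg P = (case P of Infty \<Rightarrow> Infty | Pt x y \<Rightarrow> Pt x (- y))"

lemma neg_neg [simp]: "neg (neg P) = P" unfolding neg_def by (cases P) auto
lemma neg_Infty [simp]: "neg Infty = Infty" unfolding neg_def by simp
lemma neg_Pt [simp]: "neg (Pt x y) = Pt x (-y)" unfolding neg_def by simp

lemma add_neg: "ec_add a2 a4 P (neg P) = Infty"
  by (cases P) (auto simp: add_opposite)

text \<open>A chord through a 2-torsion point (x1,0) and another point cannot be tangent to the
  curve at (x1,0): otherwise the line would meet the cubic in x1 with multiplicity 3.\<close>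
lemma no_tangent_chord_at_torsion:
  assumes "cubic x1 = 0" and ne: "x1 \<noteq> x2"
    and L: "\<And>x. cubic x - (l*(x-x1))^2 = (x-x1)*(x-x2)*(x-x1)"
  shows False
proof -
  have other_roots: "l^2 + e - x2 = 0" if "cubic e = 0" "e \<noteq> x1" for e
  proof -
    have "(e-x1)^2 * (l^2 + e - x2) = 0"
      using L[of e] that by (simp add: power2_eq_square algebra_simps)
    then show ?thesis using that by simp
  qed
  from cubic_zero[OF assms(1)] show False
    using other_roots[OF cubic_roots(1)] other_roots[OF cubic_roots(2)]
      other_roots[OF cubic_roots(3)] d12 d13 d23 by auto
qed

text \<open>The third intersection point (x3, y3) = -(P+Q) of the chord through P = (x1,y1) and
  Q = (x2,y2) lies on the same line, so the chord from P to it has the same slope.\<close>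
lemma slope_to_third_point:
  assumes c1: "y1^2 = cubic x1" and c2: "y2^2 = cubic x2" and PQ: "\<not> (x1 = x2 \<and> y1 = - y2)"
  defines "l \<equiv> slope x1 y1 x2 y2"
  defines "x3 \<equiv> l^2 - a2 - x1 - x2"
  defines "y3 \<equiv> y1 + l * (x3 - x1)"
  assumes not_opposite: "\<not> (x1 = x3 \<and> y1 = - y3)"
  shows "slope x1 y1 x3 y3 = l"
proof (cases "x1 = x3")
  case True
  have L: "\<And>x. cubic x - (l*(x-x1)+y1)^2 = (x-x1)*(x-x2)*(x-x3)"
    using chord_identity[OF c1 c2 PQ] unfolding l_def x3_def by simp
  have "y3^2 = cubic x3" using L[of x3] unfolding y3_def by (simp add: algebra_simps)
  then have "y3 = y1" using not_opposite True c1 same_x_on_curve by auto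
  then have y1: "y1 \<noteq> 0" using not_opposite True by auto
  have "3 * x1^2 + 2 * a2 * x1 + a4 - 2*l*y1
      = (chord_defect l x1 y1 x2 1 - chord_defect l x1 y1 x2 0) + (x1-x2)*(x1-x3)"
    unfolding chord_defect_def cubic_def x3_def unfolding ha2 ha4 by algebra
  then show ?thesis
    using True y1 chord_defect_zero[OF c1 c2 PQ] unfolding slope_def l_def
    by (simp add: field_simps)
next
  case False then show ?thesis unfolding slope_def y3_def by simp
qed

text \<open>The basic relation of the chord construction: P + (-(P+Q)) = -Q.  It encodes that
  P, Q and -(P+Q) are the three intersection points of one line with the curve.\<close>
lemma add_neg_sum:
  assumes "on_curve a2 a4 a6 P" "on_curve a2 a4 a6 Q"
  shows "ec_add a2 a4 P (neg (ec_add a2 a4 P Q)) = neg Q"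
proof (cases P; cases Q)
  fix x1 y1 x2 y2 assume P: "P = Pt x1 y1" and Q: "Q = Pt x2 y2"
  show ?thesis
  proof (cases "x1 = x2 \<and> y1 = - y2")
    case True then show ?thesis using P Q add_opposite by simp
  next
    case False
    have c1: "y1^2 = cubic x1" and c2: "y2^2 = cubic x2" using assms P Q on_curve_Pt by auto
    define l where "l = slope x1 y1 x2 y2"
    define x3 where "x3 = l^2 - a2 - x1 - x2"
    define y3 where "y3 = y1 + l * (x3 - x1)"
    have sum: "neg (ec_add a2 a4 P Q) = Pt x3 y3"
      using P Q False by (simp add: add_Pt l_def[symmetric] x3_def[symmetric] y3_def)
    have y2_on_line: "-(y1 + l*(x2-x1)) = - y2"
    proof (cases "x1 = x2")
      case True then show ?thesis using False c1 c2 same_x_on_curve by auto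
    next
      case False then show ?thesis unfolding l_def slope_def by simp
    qed
    have x2_back: "l^2 - a2 - x1 - x3 = x2" unfolding x3_def by simp
    show ?thesis
    proof (cases "x1 = x3 \<and> y1 = - y3")
      case True
      have L: "\<And>x. cubic x - (l*(x-x1)+y1)^2 = (x-x1)*(x-x2)*(x-x3)"
        using chord_identity[OF c1 c2 False] unfolding l_def x3_def by simp
      from True have "y1 = 0" unfolding y3_def by auto
      moreover have "x1 \<noteq> x2" using c1 c2 same_x_on_curve \<open>y1 = 0\<close> False by auto
      ultimately show ?thesis
        using no_tangent_chord_at_torsion[of x1 x2 l] L True c1 by auto
    next
      case not_opposite: False
      have "slope x1 y1 x3 y3 = l"
        using slope_to_third_point[OF c1 c2 False] not_opposite
        unfolding y3_def x3_def l_def by blast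
      then show ?thesis using not_opposite sum P Q x2_back y2_on_line by (simp add: add_Pt)
    qed
  qed
qed (auto simp: add_neg add_opposite)

lemma add_left_cancel:
  assumes "on_curve a2 a4 a6 P" "on_curve a2 a4 a6 X" "on_curve a2 a4 a6 Y"
    and "ec_add a2 a4 P X = ec_add a2 a4 P Y"
  shows "X = Y"
  using add_neg_sum[OF assms(1,2)] add_neg_sum[OF assms(1,3)] assms(4) by (metis neg_neg)

lemma on_curve_mult: "on_curve a2 a4 a6 P \<Longrightarrow> on_curve a2 a4 a6 (ec_mult a2 a4 n P)"
proof (induction n)
  case 0 then show ?case by (simp add: on_curve_def)
next
  case (Suc n) then show ?case using on_curve_add by simp
qed

lemma mult_2: "ec_mult a2 a4 2 P = ec_add a2 a4 P P"
  by (simp add: numeral_eq_Suc)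

lemma mult_3: "ec_mult a2 a4 3 P = ec_add a2 a4 P (ec_add a2 a4 P P)"
  by (simp add: numeral_eq_Suc)

text \<open>If N P = O then (N - j) P = -(j P); this replaces associativity of the group law,
  which the argument never needs in full.\<close>
lemma mult_complement:
  assumes P: "on_curve a2 a4 a6 P" and N: "ec_mult a2 a4 N P = Infty" and "j \<le> N"
  shows "ec_mult a2 a4 (N - j) P = neg (ec_mult a2 a4 j P)"
  using assms(3)
proof (induction j)
  case 0 then show ?case using N by simp
next
  case (Suc j)
  then have IH: "ec_mult a2 a4 (N - j) P = neg (ec_mult a2 a4 j P)" by simp
  have "N - j = Suc (N - Suc j)" using Suc by simp
  then have "ec_add a2 a4 P (ec_mult a2 a4 (N - Suc j) P)
           = ec_add a2 a4 P (neg (ec_mult a2 a4 (Suc j) P))"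
    using IH add_neg_sum[OF P on_curve_mult[OF P, of j]] by simp
  moreover have "on_curve a2 a4 a6 (neg (ec_mult a2 a4 (Suc j) P))"
    using on_curve_mult[OF P, of "Suc j"] by (cases "ec_mult a2 a4 (Suc j) P") (auto simp: on_curve_def)
  ultimately show ?case using add_left_cancel P on_curve_mult by blast
qed

lemma two_torsion_point:
  assumes "on_curve a2 a4 a6 X" "X = neg X" "X \<noteq> Infty"
  shows "\<exists>t. X = Pt t 0 \<and> (t = e1 \<or> t = e2 \<or> t = e3)"
proof (cases X)
  case (Pt t yt)
  then have "yt = 0" using assms(2) by simp
  then show ?thesis using assms(1) Pt cubic_zero on_curve_Pt by auto
qed (use assms in auto)

end

text \<open>The hypotheses of the locale are symmetric in the roots, so every result proved for
  e1 also holds for e2 and e3.\<close>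
lemma split_curve_swap: "split_curve a2 a4 a6 e1 e2 e3 \<Longrightarrow> split_curve a2 a4 a6 e2 e1 e3"
  unfolding split_curve_def by (auto simp: algebra_simps)

lemma split_curve_rotate: "split_curve a2 a4 a6 e1 e2 e3 \<Longrightarrow> split_curve a2 a4 a6 e3 e1 e2"
  unfolding split_curve_def by (auto simp: algebra_simps)

section \<open>The 2-descent map\<close>

text \<open>The descent map attached to the root e: P = (x,y) goes to x - e, except at the
  2-torsion point (e,0), where it takes the value (e-e')(e-e''); O goes to 1.  Modulo
  squares it is a homomorphism from the group of rational points to Q*/Q*^2.\<close>
definition descent :: "rat \<Rightarrow> rat \<Rightarrow> rat \<Rightarrow> ecpt \<Rightarrow> rat" where
  "descent e e' e'' P = (case P of Infty \<Rightarrow> 1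
     | Pt x y \<Rightarrow> if x = e then (e-e')*(e-e'') else x - e)"

context split_curve begin

lemma descent_nonzero: "descent e1 e2 e3 P \<noteq> 0"
  unfolding descent_def using d12 d13 by (cases P) auto

lemma chord_through_root:
  assumes "y^2 = cubic x" and "l*(x-e1) = y" and "x \<noteq> e1"
  shows "(x-e1)*((l^2 - a2 - e1 - x)-e1) = (e1-e2)*(e1-e3)"
proof -
  have "(x-e1) * (l^2*(x-e1) - (x-e2)*(x-e3)) = 0" using assms(1,2) unfolding cubic_def by algebra
  then have "l^2*(x-e1) = (x-e2)*(x-e3)" using assms(3) by simp
  then show ?thesis unfolding ha2 by algebra
qed

lemma descent_chord_through_root:
  assumes "y^2 = cubic x" and "l*(x-e1) = y" and "x \<noteq> e1"
  shows "is_square (descent e1 e2 e3 (Pt e1 y0) * descent e1 e2 e3 (Pt x y)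
                    * descent e1 e2 e3 (Pt (l^2 - a2 - e1 - x) y'))"
proof -
  define D where "D = (e1-e2)*(e1-e3)"
  have D: "D \<noteq> 0" unfolding D_def using d12 d13 by simp
  have E: "(x-e1)*((l^2 - a2 - e1 - x)-e1) = D"
    using chord_through_root[OF assms] unfolding D_def .
  then have "l^2 - a2 - e1 - x \<noteq> e1" using D by auto
  then have "descent e1 e2 e3 (Pt e1 y0) * descent e1 e2 e3 (Pt x y)
               * descent e1 e2 e3 (Pt (l^2 - a2 - e1 - x) y') = D * D"
    using assms(3) E by (simp add: descent_def D_def mult.assoc)
  then show ?thesis by simp
qed

text \<open>Multiplicativity modulo squares: d(P) d(Q) d(P+Q) is a square.  On a chord with
  abscissae x1, x2, x3 avoiding e1, the product is the square of the chord's value at e1.\<close>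
lemma descent_add:
  assumes "on_curve a2 a4 a6 P" "on_curve a2 a4 a6 Q"
  shows "is_square (descent e1 e2 e3 P * descent e1 e2 e3 Q * descent e1 e2 e3 (ec_add a2 a4 P Q))"
proof (cases P; cases Q)
  fix x1 y1 x2 y2 assume P: "P = Pt x1 y1" and Q: "Q = Pt x2 y2"
  show ?thesis
  proof (cases "x1 = x2 \<and> y1 = - y2")
    case True then show ?thesis using P Q add_opposite by (simp add: descent_def)
  next
    case False
    have c1: "y1^2 = cubic x1" and c2: "y2^2 = cubic x2" using assms P Q on_curve_Pt by auto
    define l where "l = slope x1 y1 x2 y2"
    define x3 where "x3 = l^2 - a2 - x1 - x2"
    have L: "\<And>x. cubic x - (l*(x-x1)+y1)^2 = (x-x1)*(x-x2)*(x-x3)"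
      using chord_identity[OF c1 c2 False] unfolding l_def x3_def by simp
    obtain y3 where sum: "ec_add a2 a4 P Q = Pt x3 y3"
      using P Q False by (simp add: add_Pt l_def[symmetric] x3_def[symmetric])
    have at_e1: "(x1-e1)*(x2-e1)*(x3-e1) = (l*(e1-x1)+y1)^2"
      using L[of e1] cubic_roots(1) by (simp add: algebra_simps)
    have l12: "l*(x2-x1) = y2 - y1" if "x1 \<noteq> x2" using that unfolding l_def slope_def by simp
    consider "x1 = e1" | "x1 \<noteq> e1" "x2 = e1" | "x1 \<noteq> e1" "x3 = e1"
      | "x1 \<noteq> e1" "x2 \<noteq> e1" "x3 \<noteq> e1" by blast
    then show ?thesis
    proof cases
      case 1
      then have "y1 = 0" using c1 cubic_roots(1) by simp
      then have "x2 \<noteq> e1" using 1 False c2 cubic_roots(1) by auto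
      then show ?thesis unfolding sum unfolding P Q
        using descent_chord_through_root[OF c2 _ \<open>x2 \<noteq> e1\<close>, of l y1 y3] l12 1 \<open>y1 = 0\<close>
        by (simp add: x3_def)
    next
      case 2
      then have "y2 = 0" using c2 cubic_roots(1) by simp
      then show ?thesis unfolding sum unfolding P Q
        using descent_chord_through_root[OF c1 _ \<open>x1 \<noteq> e1\<close>, of l y2 y3] l12 2
        by (simp add: x3_def algebra_simps)
    next
      case 3
      then have "l*(x1-e1) = y1" using at_e1 by (simp add: algebra_simps)
      moreover have "x2 = l^2 - a2 - e1 - x1" using 3 x3_def by auto
      ultimately show ?thesis unfolding sum unfolding P Q
        using descent_chord_through_root[OF c1 _ \<open>x1 \<noteq> e1\<close>, of l y3 y2] 3
        by (simp add: ac_simps)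
    next
      case 4
      then show ?thesis unfolding sum unfolding P Q using at_e1 by (simp add: descent_def)
    qed
  qed
qed (auto simp: descent_def)

lemma descent_mult:
  assumes "on_curve a2 a4 a6 P"
  shows "is_square (descent e1 e2 e3 (ec_mult a2 a4 n P) * descent e1 e2 e3 P ^ n)"
proof (induction n)
  case 0 then show ?case by (simp add: descent_def)
next
  case (Suc n)
  from is_square_quotient[OF descent_add[OF assms on_curve_mult[OF assms, of n]] Suc descent_nonzero]
  show ?case by (simp add: algebra_simps)
qed

lemma descent_even_mult:
  assumes "on_curve a2 a4 a6 P"
  shows "is_square (descent e1 e2 e3 (ec_mult a2 a4 (2*m) P))"
proof -
  have "descent e1 e2 e3 P ^ (2*m) = (descent e1 e2 e3 P ^ m)^2"
    by (metis power_mult mult.commute)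
  then show ?thesis
    using descent_mult[OF assms, of "2*m"] is_square_cancel[of _ "descent e1 e2 e3 P ^ m"]
      descent_nonzero by simp
qed

end

section \<open>Doubling\<close>

text \<open>The square root of x(2P) - e: for P = (x,y) it is ((x-e)^2 - (e-e')(e-e''))/(2y).\<close>
definition double_sqrt :: "rat \<Rightarrow> rat \<Rightarrow> rat \<Rightarrow> rat \<Rightarrow> rat \<Rightarrow> rat" where
  "double_sqrt x y e e' e'' = ((x-e)^2 - (e-e')*(e-e''))/(2*y)"

text \<open>A rational identity expressing that the doubling map commutes with translation by
  the 2-torsion point (0,0) on y^2 = t (t+p) (t+q): the translation sends t to pq/t.\<close>
lemma doubling_quotient_symmetry:
  fixes s t p q :: rat
  assumes st: "s*t = p*q"
    and nz: "t \<noteq> 0" "s \<noteq> 0" "t+p \<noteq> 0" "t+q \<noteq> 0" "s+p \<noteq> 0" "s+q \<noteq> 0"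
  shows "(s^2 - p*q)^2 / (4*(s*(s+p)*(s+q))) = (t^2 - p*q)^2 / (4*(t*(t+p)*(t+q)))"
proof -
  have "(s^2 - p*q)^2 * (4*(t*(t+p)*(t+q))) = (t^2 - p*q)^2 * (4*(s*(s+p)*(s+q)))"
    using st by algebra
  then show ?thesis using nz by (simp add: frac_eq_eq)
qed

context split_curve begin

definition double_x :: "rat \<Rightarrow> rat \<Rightarrow> rat" where
  "double_x x y = ((3*x^2 + 2*a2*x + a4)/(2*y))^2 - a2 - x - x"

lemma add_double:
  assumes "y \<noteq> 0"
  shows "ec_add a2 a4 (Pt x y) (Pt x y)
       = Pt (double_x x y) (- (y + slope x y x y * (double_x x y - x)))"
  using assms add_Pt[of x x y y] by (simp add: slope_def double_x_def)

lemma double_x_minus_root: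
  assumes y: "y \<noteq> 0" and on_curve: "y^2 = cubic x"
  shows "double_x x y - e1 = (double_sqrt x y e1 e2 e3)^2"
proof -
  define L where "L = 3*x^2 + 2*a2*x + a4"
  define N where "N = (x-e1)^2 - (e1-e2)*(e1-e3)"
  have "L^2 - 4*(a2 + 2*x + e1) * cubic x = N^2"
    unfolding L_def N_def cubic_def unfolding ha2 ha4 by algebra
  then have key: "L^2 - 4*(a2 + 2*x + e1) * y^2 = N^2" using on_curve by simp
  have "double_x x y - e1 = (L^2 - 4*(a2 + 2*x + e1) * y^2)/(4*y^2)"
    using y unfolding double_x_def L_def by (simp add: field_simps power2_eq_square)
  also have "\<dots> = (N/(2*y))^2" unfolding key using y by (simp add: field_simps power2_eq_square)
  finally show ?thesis unfolding double_sqrt_def N_def .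
qed

lemma double_x_minus_root_quotient:
  assumes "y \<noteq> 0" "y^2 = cubic x"
  shows "double_x x y - e1 = ((x-e1)^2 - (e1-e2)*(e1-e3))^2 / (4 * cubic x)"
  using double_x_minus_root[OF assms] assms
  unfolding double_sqrt_def by (simp add: power_divide power_mult_distrib)

lemma double_x_relation:
  assumes y: "y \<noteq> 0" and on_curve: "y^2 = cubic x"
  shows "x = double_x x y + double_sqrt x y e1 e2 e3 * double_sqrt x y e2 e1 e3
           + double_sqrt x y e1 e2 e3 * double_sqrt x y e3 e1 e2
           + double_sqrt x y e2 e1 e3 * double_sqrt x y e3 e1 e2"
proof -
  define L where "L = 3*x^2 + 2*a2*x + a4"
  define N1 where "N1 = (x-e1)^2 - (e1-e2)*(e1-e3)"
  define N2 where "N2 = (x-e2)^2 - (e2-e1)*(e2-e3)"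
  define N3 where "N3 = (x-e3)^2 - (e3-e1)*(e3-e2)"
  have "4 * cubic x * (3*x + a2) - L^2 = N1*N2 + N1*N3 + N2*N3"
    unfolding L_def N1_def N2_def N3_def cubic_def unfolding ha2 ha4 by algebra
  then have key: "4 * y^2 * (3*x + a2) - L^2 = N1*N2 + N1*N3 + N2*N3" using on_curve by simp
  have "x - double_x x y = (4 * y^2 * (3*x + a2) - L^2)/(4*y^2)"
    using y unfolding double_x_def L_def by (simp add: field_simps power2_eq_square)
  also have "\<dots> = (N1/(2*y))*(N2/(2*y)) + (N1/(2*y))*(N3/(2*y)) + (N2/(2*y))*(N3/(2*y))"
    unfolding key using y by (simp add: field_simps power2_eq_square)
  finally show ?thesis unfolding double_sqrt_def N1_def N2_def N3_def by simp
qed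

lemma double_x_translate:
  assumes P: "on_curve a2 a4 a6 (Pt x y)" and y: "y \<noteq> 0" and x: "x \<noteq> e1"
    and R: "ec_add a2 a4 (Pt x y) (Pt e1 0) = Pt xR yR" and yR: "yR \<noteq> 0"
  shows "double_x xR yR = double_x x y"
proof -
  have c: "y^2 = cubic x" using P on_curve_Pt by simp
  define l where "l = slope x y e1 0"
  have "l * (x - e1) = y" using x unfolding l_def slope_def by (simp add: field_simps)
  moreover have "xR = l^2 - a2 - e1 - x" using R x by (simp add: add_Pt l_def)
  ultimately have "(xR - e1)*(x - e1) = (e1-e2)*(e1-e3)"
    using chord_through_root[OF c _ x] by (simp add: mult.commute)
  moreover have cR: "yR^2 = cubic xR"
    using on_curve_add[of "Pt x y" "Pt e1 0"] R P cubic_roots(1) by (simp add: on_curve_Pt)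
  moreover have "cubic x \<noteq> 0" "cubic xR \<noteq> 0" using c cR y yR by auto
  moreover have "cubic z = (z-e1)*((z-e1)+(e1-e2))*((z-e1)+(e1-e3))" for z
    unfolding cubic_def by simp
  ultimately have "((xR-e1)^2 - (e1-e2)*(e1-e3))^2 / (4 * cubic xR)
                 = ((x-e1)^2 - (e1-e2)*(e1-e3))^2 / (4 * cubic x)"
    using doubling_quotient_symmetry[of "xR - e1" "x - e1" "e1-e2" "e1-e3"] by auto
  then show ?thesis
    using double_x_minus_root_quotient[OF yR cR] double_x_minus_root_quotient[OF y c] by simp
qed

end

section \<open>Consequences of torsion\<close>

context split_curve begin

lemma double_x_translate_root:
  assumes "on_curve a2 a4 a6 (Pt x y)" "y \<noteq> 0" "x \<noteq> t" and t: "t = e1 \<or> t = e2 \<or> t = e3"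
    and "ec_add a2 a4 (Pt x y) (Pt t 0) = Pt xR yR" "yR \<noteq> 0"
  shows "double_x xR yR = double_x x y"
  using t
proof (elim disjE)
  assume "t = e1" then show ?thesis using double_x_translate assms by simp
next
  assume "t = e2"
  interpret E2: split_curve a2 a4 a6 e2 e1 e3 by (rule split_curve_swap[OF split_curve_axioms])
  show ?thesis using E2.double_x_translate assms \<open>t = e2\<close> by simp
next
  assume "t = e3"
  interpret E3: split_curve a2 a4 a6 e3 e1 e2 by (rule split_curve_rotate[OF split_curve_axioms])
  show ?thesis using E3.double_x_translate assms \<open>t = e3\<close> by simp
qed

text \<open>If P has order 4k then T = 2k P is a 2-torsion point lying in 2E(Q), so all three
  descent maps take square values at T.\<close>
lemma order_4k_descent:
  assumes P: "has_order a2 a4 a6 P (4*k)" and k: "k > 0"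
  shows "\<exists>t. (t = e1 \<or> t = e2 \<or> t = e3) \<and> is_square (descent e1 e2 e3 (Pt t 0))
           \<and> is_square (descent e2 e1 e3 (Pt t 0)) \<and> is_square (descent e3 e1 e2 (Pt t 0))"
proof -
  have on_curve: "on_curve a2 a4 a6 P" and zero: "ec_mult a2 a4 (4*k) P = Infty"
    and nonzero: "ec_mult a2 a4 (2*k) P \<noteq> Infty"
    using P k unfolding has_order_def by auto
  have "ec_mult a2 a4 (4*k - 2*k) P = neg (ec_mult a2 a4 (2*k) P)"
    by (rule mult_complement[OF on_curve zero]) simp
  then have "ec_mult a2 a4 (2*k) P = neg (ec_mult a2 a4 (2*k) P)" by (simp add: mult_2)
  then obtain t where T: "ec_mult a2 a4 (2*k) P = Pt t 0" "t = e1 \<or> t = e2 \<or> t = e3"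
    using two_torsion_point[OF on_curve_mult[OF on_curve]] nonzero by blast
  interpret E2: split_curve a2 a4 a6 e2 e1 e3 by (rule split_curve_swap[OF split_curve_axioms])
  interpret E3: split_curve a2 a4 a6 e3 e1 e2 by (rule split_curve_rotate[OF split_curve_axioms])
  show ?thesis
    using T descent_even_mult[OF on_curve, of k] E2.descent_even_mult[OF on_curve, of k]
      E3.descent_even_mult[OF on_curve, of k] by auto
qed

text \<open>A point (x,y) with y \<noteq> 0 and x(2P) = x(P) satisfies 2P = -P, i.e. it is a flex.\<close>
definition is_flex :: "rat \<Rightarrow> rat \<Rightarrow> bool" where
  "is_flex x y \<longleftrightarrow> on_curve a2 a4 a6 (Pt x y) \<and> y \<noteq> 0 \<and> double_x x y = x"

lemma flex_squares:
  assumes "is_flex x y"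
  shows "\<exists>u v w. x - e1 = u^2 \<and> x - e2 = v^2 \<and> x - e3 = w^2 \<and> u*v + u*w + v*w = 0"
proof -
  interpret E2: split_curve a2 a4 a6 e2 e1 e3 by (rule split_curve_swap[OF split_curve_axioms])
  interpret E3: split_curve a2 a4 a6 e3 e1 e2 by (rule split_curve_rotate[OF split_curve_axioms])
  have y: "y \<noteq> 0" and x: "double_x x y = x" and P: "on_curve a2 a4 a6 (Pt x y)"
    using assms unfolding is_flex_def by auto
  have c1: "y^2 = cubic x" using P on_curve_Pt by simp
  have c2: "y^2 = E2.cubic x" using P E2.on_curve_Pt by simp
  have c3: "y^2 = E3.cubic x" using P E3.on_curve_Pt by simp
  have "x - e1 = (double_sqrt x y e1 e2 e3)^2" using double_x_minus_root[OF y c1] x by simp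
  moreover have "x - e2 = (double_sqrt x y e2 e1 e3)^2" using E2.double_x_minus_root[OF y c2] x by simp
  moreover have "x - e3 = (double_sqrt x y e3 e1 e2)^2" using E3.double_x_minus_root[OF y c3] x by simp
  moreover have "double_sqrt x y e1 e2 e3 * double_sqrt x y e2 e1 e3
      + double_sqrt x y e1 e2 e3 * double_sqrt x y e3 e1 e2
      + double_sqrt x y e2 e1 e3 * double_sqrt x y e3 e1 e2 = 0"
    using double_x_relation[OF y c1] x by simp
  ultimately show ?thesis by blast
qed

lemma order3_flex:
  assumes P: "has_order a2 a4 a6 P 3"
  shows "\<exists>x y. is_flex x y"
proof -
  have on_curve: "on_curve a2 a4 a6 P" and zero: "ec_mult a2 a4 3 P = Infty"
    and nonzero: "P \<noteq> Infty"
    using P unfolding has_order_def by (auto dest: spec[of _ 1])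
  have "ec_mult a2 a4 (3 - 1) P = neg (ec_mult a2 a4 1 P)"
    by (rule mult_complement[OF on_curve zero]) simp
  then have double: "ec_add a2 a4 P P = neg P" by (simp add: mult_2)
  obtain x y where xy: "P = Pt x y" using nonzero by (cases P) auto
  have "y \<noteq> 0" using double xy add_opposite[of x x y y] by auto
  then show ?thesis using double xy on_curve add_double unfolding is_flex_def by auto
qed

text \<open>If P has order 6, then T = 3P is 2-torsion and P + T = -2P; since translation by T
  preserves doubling, -2P is a flex.\<close>
lemma order6_flex:
  assumes P: "has_order a2 a4 a6 P 6"
  shows "\<exists>x y. is_flex x y"
proof -
  have on_curve: "on_curve a2 a4 a6 P" and zero: "ec_mult a2 a4 6 P = Infty"
    and nonzero: "\<And>m. 0 < m \<Longrightarrow> m < 6 \<Longrightarrow> ec_mult a2 a4 m P \<noteq> Infty"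
    using P unfolding has_order_def by auto
  obtain x y where xy: "P = Pt x y" using nonzero[of 1] by (cases P) auto
  have "ec_add a2 a4 P P \<noteq> Infty" using nonzero[of 2] mult_2 by simp
  then have y: "y \<noteq> 0" using xy add_opposite[of x x y y] by auto
  obtain Y2 where double: "ec_add a2 a4 P P = Pt (double_x x y) Y2"
    using add_double[OF y] xy by simp
  have "ec_mult a2 a4 (6 - 3) P = neg (ec_mult a2 a4 3 P)"
    by (rule mult_complement[OF on_curve zero]) simp
  then obtain t where "ec_mult a2 a4 3 P = Pt t 0" and T2: "t = e1 \<or> t = e2 \<or> t = e3"
    using two_torsion_point[OF on_curve_mult[OF on_curve]] nonzero[of 3] by auto
  then have T: "ec_add a2 a4 P (ec_add a2 a4 P P) = Pt t 0" "t = e1 \<or> t = e2 \<or> t = e3"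
    by (simp_all add: mult_3)
  have R: "ec_add a2 a4 P (Pt t 0) = Pt (double_x x y) (- Y2)"
    using add_neg_sum[OF on_curve on_curve_add[OF on_curve on_curve]] T(1) double by simp
  have Y2: "Y2 \<noteq> 0"
  proof
    assume "Y2 = 0"
    then have "ec_add a2 a4 P P = neg (ec_add a2 a4 P P)" using double by simp
    then have "ec_add a2 a4 P (ec_add a2 a4 P P) = neg P"
      using add_neg_sum[OF on_curve on_curve] by metis
    then show False using T(1) xy y by simp
  qed
  have "x \<noteq> t" using T(2) cubic_roots on_curve xy y on_curve_Pt by auto
  then have "double_x (double_x x y) (- Y2) = double_x x y"
    using double_x_translate_root[of x y t] on_curve xy y T(2) R Y2 by simp
  moreover have "on_curve a2 a4 a6 (Pt (double_x x y) (- Y2))"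
    using on_curve_add[OF on_curve, of "Pt t 0"] R T on_curve_mult[OF on_curve, of 3]
    by (simp add: mult_3)
  ultimately have "is_flex (double_x x y) (- Y2)" using Y2 unfolding is_flex_def by simp
  then show ?thesis by blast
qed

end

section \<open>Parametrising a flex of the theta-curve\<close>

text \<open>Indeed A = l^2 (M^2 - N^2) and w = -l M N/(M+N).\<close>
lemma flex_relation_squares:
  fixes A B u v w l M N :: rat
  assumes hA: "A = u^2 - v^2" and hB: "B = w^2 - u^2" and h: "u*v + u*w + v*w = 0"
    and uM: "u = l*M" and vN: "v = l*N" and l: "l \<noteq> 0" and MN: "M + N \<noteq> 0"
    and A0: "A \<noteq> 0" and B0: "B \<noteq> 0" and AB0: "A + B \<noteq> 0"
  shows "is_square (A*((M-N)*(M+N))) \<and> is_square (B*(-(M*(M+2*N))))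
     \<and> is_square ((A+B)*(-(N*(2*M+N))))
     \<and> (M-N)*(M+N) \<noteq> 0 \<and> M*(M+2*N) \<noteq> 0 \<and> N*(2*M+N) \<noteq> 0"
proof -
  have eA: "A = l^2 * ((M-N)*(M+N))" using hA uM vN by algebra
  have "(A*((M-N)*(M+N))) * l^2 = A^2" using eA by algebra
  then have s1: "is_square (A*((M-N)*(M+N)))" using is_square_cancel[of _ l] l by simp
  have "l^2 * (B*(M+N)^2 + l^2*M^3*(M+2*N)) = 0" using hB h uM vN by algebra
  then have eB: "B*(M+N)^2 = - (l^2*M^3*(M+2*N))" using l by simp
  have "(B*(-(M*(M+2*N)))) * (M+N)^2 = (l*M^2*(M+2*N))^2" using eB by algebra
  then have s2: "is_square (B*(-(M*(M+2*N))))" using is_square_cancel[of _ "M+N"] MN by simp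
  have "l^2 * ((A+B)*(M+N)^2 + l^2*N^3*(2*M+N)) = 0" using hA hB h uM vN by algebra
  then have eC: "(A+B)*(M+N)^2 = - (l^2*N^3*(2*M+N))" using l by simp
  have "((A+B)*(-(N*(2*M+N)))) * (M+N)^2 = (l*N^2*(2*M+N))^2" using eC by algebra
  then have s3: "is_square ((A+B)*(-(N*(2*M+N))))" using is_square_cancel[of _ "M+N"] MN by simp
  have "(M-N)*(M+N) \<noteq> 0" using eA A0 by auto
  moreover have "M*(M+2*N) \<noteq> 0" using eB B0 MN by (auto simp: power3_eq_cube)
  moreover have "N*(2*M+N) \<noteq> 0" using eC AB0 MN by (auto simp: power3_eq_cube)
  ultimately show ?thesis using s1 s2 s3 by blast
qed

lemma flex_parametrization:
  fixes A B x u v w :: rat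
  assumes A: "A > 0" and B: "B > 0" and hu: "x - 0 = u^2" and hv: "x - A = v^2"
    and hw: "x - (-B) = w^2" and h: "u*v + u*w + v*w = 0"
  shows "\<exists>m n::int. coprime m n \<and> is_square (A * of_int ((m-n)*(m+n)))
     \<and> is_square (B * of_int (-(m*(m+2*n)))) \<and> is_square ((A+B) * of_int (-(n*(2*m+n))))
     \<and> (m-n)*(m+n) \<noteq> 0 \<and> m*(m+2*n) \<noteq> 0 \<and> n*(2*m+n) \<noteq> 0"
proof -
  have hA: "A = u^2 - v^2" and hB: "B = w^2 - u^2" using hu hv hw by simp_all
  have u: "u \<noteq> 0"
    using A hA by (auto simp: not_less[symmetric])
  have v: "v \<noteq> 0"
  proof
    assume "v = 0"
    then have "w = 0" using h u by simp
    then show False using hv hw \<open>v = 0\<close> A B by simp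
  qed
  have uv: "u + v \<noteq> 0"
  proof
    assume "u + v = 0"
    then have "u*v + w*(u+v) = -(u^2)" by (simp add: power2_eq_square add_eq_0_iff2)
    then show False using h u by (simp add: algebra_simps)
  qed
  obtain m n where mn: "u/v = Fract m n" "n > 0" "coprime m n" by (cases "u/v") auto
  define l where "l = v / of_int n"
  have l: "l \<noteq> 0" using v mn(2) unfolding l_def by simp
  have vN: "v = l * of_int n" using mn(2) unfolding l_def by simp
  have "u = v * (of_int m / of_int n)" using mn(1) v by (simp add: Fract_of_int_quotient field_simps)
  then have uM: "u = l * of_int m" unfolding l_def by simp
  have "u + v = l*(of_int m + of_int n)" using uM vN by (simp add: distrib_left)
  then have MN: "(of_int m :: rat) + of_int n \<noteq> 0" using uv by auto
  have "A \<noteq> 0" "B \<noteq> 0" "A + B \<noteq> 0" using A B by auto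
  from flex_relation_squares[OF hA hB h uM vN l MN this]
  have "is_square (A * of_int ((m-n)*(m+n))) \<and> is_square (B * of_int (-(m*(m+2*n))))
     \<and> is_square ((A+B) * of_int (-(n*(2*m+n))))
     \<and> of_int ((m-n)*(m+n)) \<noteq> (0::rat) \<and> of_int (m*(m+2*n)) \<noteq> (0::rat)
     \<and> of_int (n*(2*m+n)) \<noteq> (0::rat)"
    by simp
  then show ?thesis using mn(3) of_int_0 by metis
qed

section \<open>Arithmetic of the square conditions\<close>

lemma square_even_multiplicity:
  fixes z p :: int
  assumes p: "prime p" and z: "z \<noteq> 0" and s: "is_square (of_int z)"
  shows "even (multiplicity p z)"
proof -
  obtain q where q: "(of_int z :: rat) = q^2" using s unfolding is_square_def by blast
  obtain a b where ab: "q = Fract a b" "b > 0" by (cases q) auto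
  have "(of_int z :: rat) * of_int b ^ 2 = of_int a ^ 2"
    using q ab by (simp add: Fract_of_int_quotient power_divide)
  then have e: "z * b^2 = a^2" by (metis of_int_eq_iff of_int_mult of_int_power)
  have a: "a \<noteq> 0" using e z ab(2) by auto
  have pe: "prime_elem p" using p by (rule prime_imp_prime_elem)
  have b: "b \<noteq> 0" "b^2 \<noteq> 0" using ab(2) by auto
  have "multiplicity p (z * b^2) = multiplicity p z + 2 * multiplicity p b"
    using prime_elem_multiplicity_mult_distrib[OF pe z b(2)]
      prime_elem_multiplicity_power_distrib[OF pe b(1), of 2] by simp
  moreover have "multiplicity p (a^2) = 2 * multiplicity p a"
    using prime_elem_multiplicity_power_distrib[OF pe a, of 2] by simp
  ultimately have "multiplicity p z + 2 * multiplicity p b = 2 * multiplicity p a" using e by simp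
  then show ?thesis by presburger
qed

lemma square_forces_prime_divisor:
  fixes p a k W :: int
  assumes p: "prime p" and pk: "p dvd k" "\<not> p^2 dvd k" and pa: "\<not> p dvd a"
    and nz: "a \<noteq> 0" "k \<noteq> 0" "W \<noteq> 0" and s: "is_square (of_int (a * k * W))"
  shows "p dvd W"
proof (rule ccontr)
  assume pW: "\<not> p dvd W"
  have pe: "prime_elem p" using p by (rule prime_imp_prime_elem)
  have "p > 1" using p prime_gt_1_int by blast
  then have "1 \<le> multiplicity p k"
    using pk nz(2) power_dvd_iff_le_multiplicity[where p=p and n=1 and x=k] by simp
  moreover have "\<not> 2 \<le> multiplicity p k"
    using pk nz(2) \<open>p > 1\<close> power_dvd_iff_le_multiplicity[where p=p and n=2 and x=k] by simp
  ultimately have "multiplicity p k = 1" by simp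
  then have "multiplicity p (a * k * W) = 1"
    using prime_elem_multiplicity_mult_distrib[OF pe _ nz(3), of "a*k"]
      prime_elem_multiplicity_mult_distrib[OF pe nz(1,2)] pa pW nz
    by (simp add: not_dvd_imp_multiplicity_0)
  moreover have "even (multiplicity p (a * k * W))"
    using square_even_multiplicity[OF p _ s] nz by simp
  ultimately show False by simp
qed

lemma prime_dvd_determinant:
  fixes p a b c d m n :: int
  assumes p: "prime p" and mn: "coprime m n"
    and h1: "p dvd a*m + b*n" and h2: "p dvd c*m + d*n"
  shows "p dvd a*d - b*c"
proof (rule ccontr)
  assume nd: "\<not> p dvd a*d - b*c"
  have "(a*d - b*c)*m = d*(a*m + b*n) - b*(c*m + d*n)"
    and "(a*d - b*c)*n = a*(c*m + d*n) - c*(a*m + b*n)" by algebra+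
  then have "p dvd (a*d - b*c)*m" "p dvd (a*d - b*c)*n"
    using h1 h2 by (metis dvd_diff dvd_mult)+
  then have "p dvd m" "p dvd n" using nd p prime_dvd_mult_iff by blast+
  then show False using mn p by (meson coprime_common_divisor not_prime_unit)
qed

lemma prime_dvd_det_eq:
  fixes p q a b c d m n :: int
  assumes "prime p" "prime q" "coprime m n" "p dvd a*m + b*n" "p dvd c*m + d*n"
    and "\<bar>a*d - b*c\<bar> \<in> {1, q}"
  shows "p = q"
proof -
  have det: "p dvd \<bar>a*d - b*c\<bar>" using prime_dvd_determinant[OF assms(1,3-5)] by simp
  have "\<not> p dvd 1" using assms(1) by (meson not_prime_unit)
  then have "p dvd q" using det assms(6) by (metis insert_iff singletonD)
  then show ?thesis using primes_dvd_imp_eq assms(1,2) by blast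
qed

lemma odd_prime_dvd_at_most_one:
  fixes p r s :: int
  assumes p: "prime p" "p \<noteq> 2" and rs: "coprime r s"
  shows "\<not> (p dvd s - r \<and> p dvd s + r)" "\<not> (p dvd s - r \<and> p dvd 2*s)"
    "\<not> (p dvd s + r \<and> p dvd 2*s)"
proof -
  have two: "prime (2::int)" by simp
  have "p = 2" if "p dvd a*r + b*s" "p dvd c*r + d*s" "\<bar>a*d - b*c\<bar> = 2" for a b c d
    using prime_dvd_det_eq[OF p(1) two rs that(1,2)] that(3) by simp
  from this[of "-1" 1 1 1] this[of "-1" 1 0 2] this[of 1 1 0 2] p(2)
  show "\<not> (p dvd s - r \<and> p dvd s + r)" "\<not> (p dvd s - r \<and> p dvd 2*s)"
    "\<not> (p dvd s + r \<and> p dvd 2*s)" by (simp_all add: algebra_simps, blast+)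
qed

text \<open>A prime dividing two of (m-n)(m+n), m(m+2n), n(2m+n) for coprime m, n is 3: every
  pair of linear factors taken from different forms has determinant \<plusminus>1 or \<plusminus>3.\<close>
lemma prime_dvd_two_flex_forms:
  fixes p m n :: int
  assumes p: "prime p" and mn: "coprime m n"
    and two: "(p dvd (m-n)*(m+n) \<and> p dvd m*(m+2*n)) \<or> (p dvd (m-n)*(m+n) \<and> p dvd n*(2*m+n))
              \<or> (p dvd m*(m+2*n) \<and> p dvd n*(2*m+n))"
  shows "p = 3"
proof -
  have three: "prime (3::int)" by simp
  have det: "p = 3" if "p dvd a*m + b*n" "p dvd c*m + d*n" "\<bar>a*d - b*c\<bar> \<in> {1, 3}" for a b c d
    using prime_dvd_det_eq[OF p three mn that] .
  have "p dvd m - n \<or> p dvd m + n" if "p dvd (m-n)*(m+n)" using that p prime_dvd_mult_iff by blast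
  moreover have "p dvd m \<or> p dvd m + 2*n" if "p dvd m*(m+2*n)" using that p prime_dvd_mult_iff by blast
  moreover have "p dvd n \<or> p dvd 2*m + n" if "p dvd n*(2*m+n)" using that p prime_dvd_mult_iff by blast
  moreover note
    det[of 1 "-1" 1 0, simplified] det[of 1 "-1" 1 2, simplified]
    det[of 1 1 1 0, simplified] det[of 1 1 1 2, simplified]
    det[of 1 "-1" 0 1, simplified] det[of 1 "-1" 2 1, simplified]
    det[of 1 1 0 1, simplified] det[of 1 1 2 1, simplified]
    det[of 1 0 0 1, simplified] det[of 1 0 2 1, simplified]
    det[of 1 2 0 1, simplified] det[of 1 2 2 1, simplified]
  ultimately show ?thesis using two by blast
qed

lemma squarefree_int_prime_square:
  fixes k :: nat and p :: int
  assumes sf: "squarefree k" and p: "prime p"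
  shows "\<not> p^2 dvd int k"
proof
  assume h: "p^2 dvd int k"
  have p1: "p > 1" using p prime_gt_1_int by blast
  then have "int ((nat p)^2) dvd int k" using h by simp
  then have "(nat p)^2 dvd k" by (simp only: of_nat_dvd_iff)
  then have "nat p dvd 1" using sf squarefreeD by blast
  then show False using p1 by simp
qed

lemma squarefree_dvd_6:
  fixes k :: nat
  assumes k: "k > 0" and sf: "squarefree k"
    and P: "\<And>p::int. prime p \<Longrightarrow> p dvd int k \<Longrightarrow> p = 2 \<or> p = 3"
  shows "k dvd 6"
proof (rule multiplicity_le_imp_dvd)
  show "k \<noteq> 0" using k by simp
  fix q :: nat assume q: "prime q"
  show "multiplicity q k \<le> multiplicity q 6"
  proof (cases "q dvd k")
    case False then show ?thesis by (simp add: not_dvd_imp_multiplicity_0)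
  next
    case True
    then have "q = 2 \<or> q = 3" using P[of "int q"] q by auto
    moreover have "multiplicity q (6::nat) = multiplicity q 2 + multiplicity q 3"
      using q prime_elem_multiplicity_mult_distrib[of q "2::nat" 3] by simp
    ultimately have "multiplicity q (6::nat) \<ge> 1"
      using multiplicity_self[of "2::nat"] multiplicity_self[of "3::nat"] by auto
    moreover have "multiplicity q k \<le> 1" using sf k q squarefree_factorial_semiring''[of k] by auto
    ultimately show ?thesis by simp
  qed
qed

lemma divisors_6: "(k::nat) dvd 6 \<Longrightarrow> k = 1 \<or> k = 2 \<or> k = 3 \<or> k = 6"
proof -
  assume h: "k dvd 6"
  then have "k \<le> 6" by (simp add: dvd_imp_le)
  then have "k \<in> {0, 1, 2, 3, 4, 5, 6}" by auto
  then show ?thesis using h by auto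
qed

text \<open>If (s-r)k and 2sk are squares, with r, s coprime and k squarefree, then k has no odd
  prime factor: an odd p dividing k would have to divide both s - r and 2s.\<close>
lemma prime_divisors_torsion4:
  fixes r s k :: int
  assumes rs: "coprime r s" and sf: "\<And>p. prime p \<Longrightarrow> \<not> p^2 dvd k" and k: "k > 0"
    and sr: "s - r > 0" and s: "s > 0"
    and sq1: "is_square (of_int ((s-r)*k))" and sq2: "is_square (of_int ((2*s)*k))"
    and p: "prime p" and pk: "p dvd k"
  shows "p = 2"
proof (rule ccontr)
  assume p2: "p \<noteq> 2"
  have "\<not> p dvd 1" using p by (meson not_prime_unit)
  then have "p dvd s - r" "p dvd 2*s"
    using square_forces_prime_divisor[OF p pk sf[OF p], of "s-r" 1]
      square_forces_prime_divisor[OF p pk sf[OF p], of "2*s" 1] sq1 sq2 sr s k by auto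
  then show False using odd_prime_dvd_at_most_one(2)[OF p p2 rs] by blast
qed

text \<open>If the three square conditions coming from a flex hold, every prime factor of the
  squarefree k is 2 or 3: an odd p | k misses at least two of s - r, s + r, 2s, hence
  divides the corresponding two forms in m, n.\<close>
lemma prime_divisors_torsion3:
  fixes r s k m n :: int
  assumes rs: "coprime r s" and sf: "\<And>p. prime p \<Longrightarrow> \<not> p^2 dvd k" and k: "k > 0"
    and sr: "s - r > 0" and sr2: "s + r > 0" and s: "s > 0" and mn: "coprime m n"
    and z1: "(m-n)*(m+n) \<noteq> 0" and z2: "m*(m+2*n) \<noteq> 0" and z3: "n*(2*m+n) \<noteq> 0"
    and sq1: "is_square (of_int ((s-r)*k*((m-n)*(m+n))))"
    and sq2: "is_square (of_int ((s+r)*k*(-(m*(m+2*n)))))"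
    and sq3: "is_square (of_int ((2*s)*k*(-(n*(2*m+n)))))"
    and p: "prime p" and pk: "p dvd k"
  shows "p = 2 \<or> p = 3"
proof (cases "p = 2")
  case p2: False
  have "p dvd (m-n)*(m+n)" if "\<not> p dvd s - r"
    using square_forces_prime_divisor[OF p pk sf[OF p] that] sq1 sr k z1 by simp
  moreover have "p dvd m*(m+2*n)" if "\<not> p dvd s + r"
    using square_forces_prime_divisor[OF p pk sf[OF p] that, of "-(m*(m+2*n))"] sq2 sr2 k z2 by simp
  moreover have "p dvd n*(2*m+n)" if "\<not> p dvd 2*s"
    using square_forces_prime_divisor[OF p pk sf[OF p] that, of "-(n*(2*m+n))"] sq3 s k z3 by simp
  ultimately show ?thesis
    using prime_dvd_two_flex_forms[OF p mn] odd_prime_dvd_at_most_one[OF p p2 rs] by blast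
qed simp

section \<open>The theta-curve\<close>

lemma theta_split_curve:
  fixes A B :: rat
  assumes "A > 0" "B > 0"
  shows "split_curve (B - A) (-(A*B)) 0 0 A (-B)"
  by unfold_locales (use assms in auto)

text \<open>Torsion of order divisible by 4: the 2-torsion point in 2E(Q) must be (A,0), because
  the descent values -AB at (0,0) and -B at (-B,0) are negative; hence A and A + B are
  squares.\<close>
lemma theta_torsion4_squares:
  fixes A B :: rat
  assumes A: "A > 0" and B: "B > 0" and P: "has_order (B - A) (-(A*B)) 0 P (4*j)" "j > 0"
  shows "is_square A \<and> is_square (A + B)"
proof -
  interpret split_curve "B - A" "-(A*B)" 0 0 A "-B" by (rule theta_split_curve[OF A B])
  obtain t where t: "t = 0 \<or> t = A \<or> t = -B" "is_square (descent 0 A (-B) (Pt t 0))"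
    "is_square (descent (-B) 0 A (Pt t 0))"
    using order_4k_descent[OF P] by blast
  have "t \<noteq> 0" using t(2) is_square_nonneg[of "-(A*B)"] mult_pos_pos[OF A B]
    by (auto simp: descent_def)
  moreover have "t \<noteq> -B" using t(2) is_square_nonneg[of "-B"] B by (auto simp: descent_def)
  ultimately have "t = A" using t(1) by blast
  then show ?thesis using t A B by (simp add: descent_def add.commute)
qed

lemma theta_torsion3_squares:
  fixes A B :: rat
  assumes A: "A > 0" and B: "B > 0"
    and P: "has_order (B - A) (-(A*B)) 0 P 3 \<or> has_order (B - A) (-(A*B)) 0 P 6"
  shows "\<exists>m n::int. coprime m n \<and> is_square (A * of_int ((m-n)*(m+n)))
     \<and> is_square (B * of_int (-(m*(m+2*n)))) \<and> is_square ((A+B) * of_int (-(n*(2*m+n))))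
     \<and> (m-n)*(m+n) \<noteq> 0 \<and> m*(m+2*n) \<noteq> 0 \<and> n*(2*m+n) \<noteq> 0"
proof -
  interpret split_curve "B - A" "-(A*B)" 0 0 A "-B" by (rule theta_split_curve[OF A B])
  obtain x y where "is_flex x y" using P order3_flex order6_flex by blast
  then obtain u v w where "x - 0 = u^2" "x - A = v^2" "x - (-B) = w^2" "u*v + u*w + v*w = 0"
    using flex_squares by blast
  then show ?thesis using flex_parametrization[OF A B] by blast
qed

locale theta_data =
  fixes r :: int and s k :: nat
  assumes rs: "coprime r (int s)" and r_s: "\<bar>r\<bar> < int s" and k: "k > 0" and sf: "squarefree k"
begin

definition A :: rat where "A = of_int ((int s - r) * int k)"
definition B :: rat where "B = of_int ((int s + r) * int k)"

lemma A_pos: "A > 0" and B_pos: "B > 0"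
  using r_s k unfolding A_def B_def by auto

lemma A_plus_B: "A + B = of_int ((2 * int s) * int k)"
  unfolding A_def B_def by (simp add: algebra_simps)

lemma has_order_iff:
  "theta_curve_has_order r (int s) (int k) N = has_point_of_order (B - A) (-(A*B)) 0 N"
  unfolding theta_curve_has_order_def Let_def A_def B_def by simp

lemma k_squarefree_int: "prime p \<Longrightarrow> \<not> p^2 dvd int k"
  using squarefree_int_prime_square[OF sf] by blast

lemma torsion4:
  assumes "theta_curve_has_order r (int s) (int k) 4 \<or> theta_curve_has_order r (int s) (int k) 8"
  shows "k = 1 \<or> k = 2"
proof -
  obtain P j where "has_order (B - A) (-(A*B)) 0 P (4*j)" "j > 0"
    using assms unfolding has_order_iff has_point_of_order_def
    by (metis mult.right_neutral mult_2_right numeral_Bit0 zero_less_one zero_less_numeral)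
  then have "is_square A" "is_square (A + B)"
    using theta_torsion4_squares[OF A_pos B_pos] by blast+
  then have "is_square (of_int ((int s - r) * int k))" "is_square (of_int ((2 * int s) * int k))"
    unfolding A_plus_B unfolding A_def .
  then have two: "p = 2" if "prime p" "p dvd int k" for p
    using prime_divisors_torsion4[OF rs k_squarefree_int _ _ _ _ _ that] k r_s by auto
  then have "k dvd 6" using squarefree_dvd_6[OF k sf] by blast
  then have "k = 1 \<or> k = 2 \<or> k = 3 \<or> k = 6" by (rule divisors_6)
  moreover have "\<not> (3::int) dvd int k" using two[of 3] by auto
  ultimately show ?thesis by auto
qed

lemma torsion3:
  assumes "theta_curve_has_order r (int s) (int k) 3 \<or> theta_curve_has_order r (int s) (int k) 6"
  shows "k dvd 6"
proof -
  obtain P where "has_order (B - A) (-(A*B)) 0 P 3 \<or> has_order (B - A) (-(A*B)) 0 P 6"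
    using assms unfolding has_order_iff has_point_of_order_def by blast
  then obtain m n :: int where mn: "coprime m n" "is_square (A * of_int ((m-n)*(m+n)))"
    "is_square (B * of_int (-(m*(m+2*n))))" "is_square ((A+B) * of_int (-(n*(2*m+n))))"
    "(m-n)*(m+n) \<noteq> 0" "m*(m+2*n) \<noteq> 0" "n*(2*m+n) \<noteq> 0"
    using theta_torsion3_squares[OF A_pos B_pos] by blast
  have "is_square (of_int ((int s - r) * int k * ((m-n)*(m+n))))"
    "is_square (of_int ((int s + r) * int k * (-(m*(m+2*n)))))"
    "is_square (of_int ((2 * int s) * int k * (-(n*(2*m+n)))))"
    using mn(2-4) unfolding A_plus_B unfolding A_def B_def by simp_all
  then have "p = 2 \<or> p = 3" if "prime p" "p dvd int k" for p
    using prime_divisors_torsion3[OF rs k_squarefree_int _ _ _ _ mn(1,5-7) _ _ _ that] k r_s by auto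
  then show ?thesis using squarefree_dvd_6[OF k sf] by blast
qed

end

theorem theorem4p2:
  fixes r :: int and s k :: nat
  assumes "coprime r (int s)" and "\<bar>r\<bar> < int s"
    and "k > 0" and "squarefree k"
  shows "(odd k \<and> (theta_curve_has_order r (int s) (int k) 4 \<or> theta_curve_has_order r (int s) (int k) 8) \<longrightarrow> k = 1)
       \<and> (even k \<and> (theta_curve_has_order r (int s) (int k) 4 \<or> theta_curve_has_order r (int s) (int k) 8) \<longrightarrow> k = 2)
       \<and> (odd k \<and> (theta_curve_has_order r (int s) (int k) 3 \<or> theta_curve_has_order r (int s) (int k) 6) \<longrightarrow> k \<in> {1, 3})
       \<and> (even k \<and> (theta_curve_has_order r (int s) (int k) 3 \<or> theta_curve_has_order r (int s) (int k) 6) \<longrightarrow> k \<in> {2, 6})"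
proof -
  interpret theta_data r s k using assms by unfold_locales
  have "k = 1 \<or> k = 2"
    if "theta_curve_has_order r (int s) (int k) 4 \<or> theta_curve_has_order r (int s) (int k) 8"
    using torsion4[OF that] .
  moreover have "k = 1 \<or> k = 2 \<or> k = 3 \<or> k = 6"
    if "theta_curve_has_order r (int s) (int k) 3 \<or> theta_curve_has_order r (int s) (int k) 6"
    using divisors_6[OF torsion3[OF that]] .
  ultimately show ?thesis by auto
qed

end
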